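(* Let $N\in\mathbb N$ be fixed. There exist constants $C,\alpha>0$ such that for every $T>0$ and every two solutions $u_1(t),u_2(t)$, $t\in[-T,0]$, of (E) with $u_1(t)-u_2(t)\in K^+$ for all $t\in[-T,0]$, one has $\|u_1(-T)-u_2(-T)\|^2_{H^{-1}}\le Ce^{\alpha T}\|P_Nu_1(0)-P_Nu_2(0)\|^2_{H^{-1}}.$
   Context: Let $H$ be a real separable Hilbert space with inner product $(\cdot,\cdot)$ and norm $\|\cdot\|_H$, and let $A:D(A)\to H$ be a linear self-adjoint positive operator with compact inverse, with orthonormal eigenbasis $\{e_n\}$, $Ae_n=\lambda_ne_n$, $0<\lambda_1\le\lambda_2\le\dots\to\infty$. For $s\ge0$, $H^s=D(A^{s/2})$ with $\|u\|_{H^s}^2=\sum_n\lambda_n^s|(u,e_n)|^2$; for $s<0$, $H^s$ is the completion of $H$ in this norm. $P_Nu=\sum_{n\le N}(u,e_n)e_n$, $Q_N=\mathrm{Id}-P_N$. $F:H\to H$ is globally bounded and globally Lipschitz with constant $L$. (E) is $\partial_tu+A^2u+AF(u)=0$. $V(\xi)=\|Q_N\xi\|^2_{H^{-1}}-\|P_N\xi\|^2_{H^{-1}}$, $K^+=\{\xi\in H^{-1}:V(\xi)\le0\}$. The constants $C,\alpha$ may depend on $N$, $A$, $L$ but not on $u_1,u_2,T$. *)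

theory Defs
  imports "HOL-Analysis.Analysis"
begin

text \<open>The operator A is given through its spectral data: an orthonormal
  eigenbasis e (indexed from 0) with eigenvalues lam,
  A (e n) = lam n *R e n, 0 < lam 0 \<le> lam 1 \<le> ... tending to infinity.
  (A self-adjoint positive with compact inverse is exactly determined by such data.)\<close>

definition spectral_data :: "(nat \<Rightarrow> 'a::{real_inner,complete_space}) \<Rightarrow> (nat \<Rightarrow> real) \<Rightarrow> bool" where
  "spectral_data e lam \<longleftrightarrow>
     (\<forall>m n. inner (e m) (e n) = (if m = n then 1 else 0)) \<and>
     (\<forall>u. (\<lambda>n. inner u (e n) *\<^sub>R e n) sums u) \<and>
     0 < lam 0 \<and> mono lam \<and> filterlim lam at_top sequentially"

definition hm1_sq :: "(nat \<Rightarrow> 'a::real_inner) \<Rightarrow> (nat \<Rightarrow> real) \<Rightarrow> 'a \<Rightarrow> real" where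
  "hm1_sq e lam \<xi> = (\<Sum>n. (inner \<xi> (e n))\<^sup>2 / lam n)"

definition projP :: "(nat \<Rightarrow> 'a::real_inner) \<Rightarrow> nat \<Rightarrow> 'a \<Rightarrow> 'a" where
  "projP e N u = (\<Sum>n<N. inner u (e n) *\<^sub>R e n)"

definition projQ :: "(nat \<Rightarrow> 'a::real_inner) \<Rightarrow> nat \<Rightarrow> 'a \<Rightarrow> 'a" where
  "projQ e N u = u - projP e N u"

definition Vfun :: "(nat \<Rightarrow> 'a::real_inner) \<Rightarrow> (nat \<Rightarrow> real) \<Rightarrow> nat \<Rightarrow> 'a \<Rightarrow> real" where
  "Vfun e lam N \<xi> = hm1_sq e lam (projQ e N \<xi>) - hm1_sq e lam (projP e N \<xi>)"

definition Kplus :: "(nat \<Rightarrow> 'a::real_inner) \<Rightarrow> (nat \<Rightarrow> real) \<Rightarrow> nat \<Rightarrow> 'a set" where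
  "Kplus e lam N = {\<xi>. Vfun e lam N \<xi> \<le> 0}"

text \<open>Solution of (E): u_t + A^2 u + A F(u) = 0 on [-T,0]: u continuous into H and,
  testing the equation against each eigenvector e n (A self-adjoint),
  d/dt (u,e_n) = - lam_n^2 (u,e_n) - lam_n (F(u),e_n) on [-T,0].\<close>
definition is_solution :: "(nat \<Rightarrow> 'a::real_inner) \<Rightarrow> (nat \<Rightarrow> real) \<Rightarrow> ('a \<Rightarrow> 'a) \<Rightarrow> real \<Rightarrow> (real \<Rightarrow> 'a) \<Rightarrow> bool" where
  "is_solution e lam F T u \<longleftrightarrow>
     continuous_on {-T..0} u \<and>
     (\<forall>n. \<forall>t\<in>{-T..0}.
        ((\<lambda>s. inner (u s) (e n)) has_real_derivative
           (- (lam n)\<^sup>2 * inner (u t) (e n) - lam n * inner (F (u t)) (e n))) (at t within {-T..0}))"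

end

theory Submission
  imports Defs
begin

text \<open>Let \<open>w = u1 - u2\<close> and \<open>p = \<parallel>P\<^sub>N w\<parallel>\<^sup>2\<close> in \<open>H\<^sup>-\<^sup>1\<close>. In the cone \<open>K\<^sup>+\<close> the full \<open>H\<^sup>-\<^sup>1\<close> norm of \<open>w\<close>
  is at most \<open>2p\<close>, so it suffices to show \<open>p(-T) \<le> 2 e\<^sup>2\<^sup>c\<^sup>T p(0)\<close>. Differentiating \<open>log p\<close>
  produces a loss of order \<open>\<parallel>w\<parallel>\<^sub>H/\<surd>p\<close>, which \<open>p\<close> alone does not control. It is paid for by the
  dissipation in \<open>-(log \<Phi>)/2\<close>, where \<open>p \<le> \<Phi> \<le> 2p\<close> is a longer spectral truncation of the
  \<open>H\<^sup>-\<^sup>1\<close> norm: by interpolation between \<open>H\<^sup>1\<close> and \<open>H\<^sup>-\<^sup>1\<close> this dissipation is at least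
  \<open>\<parallel>w\<parallel>\<^sup>4\<^sub>H/\<Phi>\<^sup>2\<close>. So \<open>log p - (log \<Phi>)/2 + c t\<close> is nondecreasing as long as \<open>p > 0\<close>, and by
  continuity \<open>p\<close> cannot reach zero in finite time.\<close>

lemma spectral_dataD:
  assumes "spectral_data e lam"
  shows spectral_data_orthonormal: "inner (e m) (e n) = (if m = n then 1 else 0)"
    and spectral_data_sums: "(\<lambda>n. inner u (e n) *\<^sub>R e n) sums u"
    and spectral_data_mono: "m \<le> n \<Longrightarrow> lam m \<le> lam n"
  using assms by (auto simp: spectral_data_def monoD)

lemma spectral_data_pos:
  assumes "spectral_data e lam"
  shows "0 < lam n"
  using assms spectral_data_mono[OF assms, of 0 n] by (simp add: spectral_data_def)

lemma inner_projP_basis: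
  assumes "spectral_data e lam"
  shows "inner (projP e N x) (e n) = (if n < N then inner x (e n) else 0)"
  unfolding projP_def using assms
  by (simp add: inner_sum_left spectral_data_orthonormal if_distrib cong: if_cong)

lemma inner_projQ_basis:
  assumes "spectral_data e lam"
  shows "inner (projQ e N x) (e n) = (if n < N then 0 else inner x (e n))"
  unfolding projQ_def using inner_projP_basis[OF assms] by (simp add: inner_diff_left)

lemma projP_diff: "projP e N (x - y) = projP e N x - projP e N y"
  by (simp add: projP_def inner_diff_left scaleR_diff_left sum_subtractf)

lemma projQ_diff: "projQ e N (x - y) = projQ e N x - projQ e N y"
  by (simp add: projQ_def projP_diff)

lemma inner_projP_right: "inner y (projP e N x) = (\<Sum>n<N. inner x (e n) * inner y (e n))"
  by (simp add: projP_def inner_sum_right)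

lemma norm_projP_sq:
  assumes "spectral_data e lam"
  shows "(norm (projP e N x))\<^sup>2 = (\<Sum>n<N. (inner x (e n))\<^sup>2)"
  unfolding power2_norm_eq_inner inner_projP_right[of "projP e N x"]
  by (simp add: inner_projP_basis[OF assms] power2_eq_square)

lemma norm_projP_projQ_sq:
  assumes "spectral_data e lam"
  shows "(norm x)\<^sup>2 = (norm (projP e N x))\<^sup>2 + (norm (projQ e N x))\<^sup>2"
proof -
  have "inner (projP e N x) x = (norm (projP e N x))\<^sup>2"
    unfolding inner_commute[of _ x] inner_projP_right norm_projP_sq[OF assms]
    by (simp add: power2_eq_square)
  then have "inner (projP e N x) (projQ e N x) = 0"
    by (simp add: projQ_def inner_diff_right power2_norm_eq_inner)
  then have "(norm (projP e N x + projQ e N x))\<^sup>2 = (norm (projP e N x))\<^sup>2 + (norm (projQ e N x))\<^sup>2"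
    by (intro norm_add_Pythagorean) (simp add: orthogonal_def)
  then show ?thesis by (simp add: projQ_def)
qed

lemma norm_projQ_le:
  assumes "spectral_data e lam"
  shows "norm (projQ e N x) \<le> norm x"
proof (rule power2_le_imp_le)
  show "(norm (projQ e N x))\<^sup>2 \<le> (norm x)\<^sup>2"
    using norm_projP_projQ_sq[OF assms, of x N] zero_le_power2[of "norm (projP e N x)"] by linarith
qed simp

lemma projQ_tendsto_zero:
  assumes "spectral_data e lam"
  shows "(\<lambda>K. projQ e K x) \<longlonglongrightarrow> 0"
proof -
  have "(\<lambda>K. projP e K x) \<longlonglongrightarrow> x"
    using spectral_data_sums[OF assms, of x] by (simp add: sums_def projP_def)
  then have "(\<lambda>K. x - projP e K x) \<longlonglongrightarrow> x - x"
    by (intro tendsto_diff tendsto_const)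
  then show ?thesis by (simp add: projQ_def)
qed

text \<open>The tails of the eigenfunction expansion tend to zero uniformly on compact sets:
  cover the set by finitely many \<open>\<epsilon>/2\<close>-balls and use that \<open>Q\<^sub>K\<close> is a contraction.\<close>
lemma uniform_projQ_tendsto_zero:
  assumes sd: "spectral_data e lam" and S: "compact S" and \<epsilon>: "0 < \<epsilon>"
  shows "\<forall>\<^sub>F K in sequentially. \<forall>x\<in>S. norm (projQ e K x) < \<epsilon>"
proof -
  obtain C where C: "C \<subseteq> S" "finite C" "S \<subseteq> (\<Union>c\<in>C. ball c (\<epsilon>/2))"
    by (rule compactE_image[OF S, of S "\<lambda>c. ball c (\<epsilon>/2)"]) (use \<epsilon> in auto)
  have "\<forall>\<^sub>F K in sequentially. norm (projQ e K c) < \<epsilon>/2" for c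
    by (rule order_tendstoD(2)[OF tendsto_norm_zero[OF projQ_tendsto_zero[OF sd]]]) (use \<epsilon> in simp)
  then have "\<forall>\<^sub>F K in sequentially. \<forall>c\<in>C. norm (projQ e K c) < \<epsilon>/2"
    using C(2) by (intro eventually_ball_finite) auto
  then show ?thesis
  proof (rule eventually_mono, intro ballI)
    fix K x assume small: "\<forall>c\<in>C. norm (projQ e K c) < \<epsilon>/2" and "x \<in> S"
    then obtain c where c: "c \<in> C" "dist c x < \<epsilon>/2" using C(3) by auto
    have "norm (projQ e K x) \<le> norm (projQ e K c) + norm (projQ e K (x - c))"
      using norm_triangle_ineq[of "projQ e K c" "projQ e K (x - c)"] by (simp add: projQ_diff)
    also have "\<dots> < \<epsilon>/2 + \<epsilon>/2"
    proof (rule add_less_le_mono)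
      show "norm (projQ e K c) < \<epsilon>/2" using small c(1) by blast
      have "norm (projQ e K (x - c)) \<le> dist c x"
        using norm_projQ_le[OF sd, of K "x - c"] by (simp add: dist_norm norm_minus_commute)
      then show "norm (projQ e K (x - c)) \<le> \<epsilon>/2" using c(2) by linarith
    qed
    finally show "norm (projQ e K x) < \<epsilon>" by simp
  qed
qed

definition hm1_part :: "(nat \<Rightarrow> 'a::real_inner) \<Rightarrow> (nat \<Rightarrow> real) \<Rightarrow> nat \<Rightarrow> 'a \<Rightarrow> real" where
  "hm1_part e lam K x = (\<Sum>n<K. (inner x (e n))\<^sup>2 / lam n)"

definition h1_part :: "(nat \<Rightarrow> 'a::real_inner) \<Rightarrow> (nat \<Rightarrow> real) \<Rightarrow> nat \<Rightarrow> 'a \<Rightarrow> real" where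
  "h1_part e lam K x = (\<Sum>n<K. lam n * (inner x (e n))\<^sup>2)"

lemma summable_hm1_terms:
  assumes sd: "spectral_data e lam"
  shows "summable (\<lambda>n. (inner x (e n))\<^sup>2 / lam n)"
proof (rule summable_comparison_test')
  have "(\<Sum>n<N. (inner x (e n))\<^sup>2) \<le> (norm x)\<^sup>2" for N
    using norm_projP_projQ_sq[OF sd, of x N] norm_projP_sq[OF sd, of N x]
      zero_le_power2[of "norm (projQ e N x)"] by linarith
  then have "summable (\<lambda>n. (inner x (e n))\<^sup>2)"
    by (intro summableI_nonneg_bounded) auto
  then show "summable (\<lambda>n. (inner x (e n))\<^sup>2 / lam 0)"
    by (rule summable_divide)
  show "norm ((inner x (e n))\<^sup>2 / lam n) \<le> (inner x (e n))\<^sup>2 / lam 0" for n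
    using spectral_data_pos[OF sd] spectral_data_mono[OF sd, of 0 n] by (simp add: frac_le)
qed

lemma hm1_sq_projP:
  assumes "spectral_data e lam"
  shows "hm1_sq e lam (projP e K x) = hm1_part e lam K x"
  unfolding hm1_sq_def hm1_part_def inner_projP_basis[OF assms]
  by (subst suminf_finite[of "{..<K}"]) auto

lemma hm1_sq_projP_projQ:
  assumes sd: "spectral_data e lam"
  shows "hm1_sq e lam x = hm1_sq e lam (projP e K x) + hm1_sq e lam (projQ e K x)"
proof -
  have "(\<lambda>n. (inner x (e n))\<^sup>2 / lam n) =
      (\<lambda>n. (inner (projP e K x) (e n))\<^sup>2 / lam n + (inner (projQ e K x) (e n))\<^sup>2 / lam n)"
    by (rule ext) (simp add: inner_projP_basis[OF sd] inner_projQ_basis[OF sd])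
  then show ?thesis
    unfolding hm1_sq_def by (simp add: suminf_add[OF summable_hm1_terms[OF sd] summable_hm1_terms[OF sd]])
qed

lemma hm1_part_le_hm1_sq:
  assumes sd: "spectral_data e lam"
  shows "hm1_part e lam K x \<le> hm1_sq e lam x"
  unfolding hm1_sq_def hm1_part_def
  by (rule sum_le_suminf[OF summable_hm1_terms[OF sd]]) (simp_all add: spectral_data_pos[OF sd] less_imp_le)

lemma Kplus_hm1_sq_le:
  assumes sd: "spectral_data e lam" and "x \<in> Kplus e lam N"
  shows "hm1_sq e lam x \<le> 2 * hm1_part e lam N x"
  using assms(2) hm1_sq_projP_projQ[OF sd, of x N]
  by (simp add: Kplus_def Vfun_def hm1_sq_projP[OF sd])

lemma hm1_part_nonneg:
  assumes sd: "spectral_data e lam"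
  shows "0 \<le> hm1_part e lam K x"
  unfolding hm1_part_def by (intro sum_nonneg) (simp add: spectral_data_pos[OF sd] less_imp_le)

lemma hm1_part_mono:
  assumes sd: "spectral_data e lam" and "N \<le> K"
  shows "hm1_part e lam N x \<le> hm1_part e lam K x"
  unfolding hm1_part_def using assms(2)
  by (intro sum_mono2) (auto simp: spectral_data_pos[OF sd] less_imp_le)

lemma norm_projP_sq_le_hm1_part:
  assumes sd: "spectral_data e lam"
  shows "(norm (projP e N x))\<^sup>2 \<le> lam N * hm1_part e lam N x"
  unfolding norm_projP_sq[OF sd] hm1_part_def sum_distrib_left
proof (rule sum_mono)
  fix n assume "n \<in> {..<N}"
  then have "lam n \<le> lam N" by (intro spectral_data_mono[OF sd]) simp
  then have "lam n * ((inner x (e n))\<^sup>2 / lam n) \<le> lam N * ((inner x (e n))\<^sup>2 / lam n)"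
    using spectral_data_pos[OF sd, of n] by (intro mult_right_mono) auto
  then show "(inner x (e n))\<^sup>2 \<le> lam N * ((inner x (e n))\<^sup>2 / lam n)"
    using spectral_data_pos[OF sd, of n] by simp
qed

lemma h1_part_le_hm1_part:
  assumes sd: "spectral_data e lam"
  shows "h1_part e lam N x \<le> (lam N)\<^sup>2 * hm1_part e lam N x"
  unfolding h1_part_def hm1_part_def sum_distrib_left
proof (rule sum_mono)
  fix n assume "n \<in> {..<N}"
  then have "(lam n)\<^sup>2 \<le> (lam N)\<^sup>2"
    using spectral_data_pos[OF sd, of n] by (intro power_mono spectral_data_mono[OF sd]) auto
  then have "(lam n)\<^sup>2 * ((inner x (e n))\<^sup>2 / lam n) \<le> (lam N)\<^sup>2 * ((inner x (e n))\<^sup>2 / lam n)"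
    using spectral_data_pos[OF sd, of n] by (intro mult_right_mono) auto
  then show "lam n * (inner x (e n))\<^sup>2 \<le> (lam N)\<^sup>2 * ((inner x (e n))\<^sup>2 / lam n)"
    using spectral_data_pos[OF sd, of n] by (simp add: power2_eq_square)
qed

text \<open>Interpolation of \<open>H\<close> between \<open>H\<^sup>1\<close> and \<open>H\<^sup>-\<^sup>1\<close> (Cauchy--Schwarz on the coefficients).\<close>
lemma norm_projP_pow4_le:
  assumes sd: "spectral_data e lam"
  shows "((norm (projP e K x))\<^sup>2)\<^sup>2 \<le> h1_part e lam K x * hm1_part e lam K x"
proof -
  define c where "c n = inner x (e n)" for n
  have lam: "0 < lam n" for n using spectral_data_pos[OF sd] .
  have "(norm (projP e K x))\<^sup>2 = (\<Sum>n<K. (sqrt (lam n) * c n) * (c n / sqrt (lam n)))"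
    unfolding norm_projP_sq[OF sd] c_def using lam
    by (intro sum.cong refl) (simp add: power2_eq_square less_imp_neq[symmetric])
  then have "((norm (projP e K x))\<^sup>2)\<^sup>2
      \<le> (\<Sum>n<K. (sqrt (lam n) * c n)\<^sup>2) * (\<Sum>n<K. (c n / sqrt (lam n))\<^sup>2)"
    by (simp only: Cauchy_Schwarz_ineq_sum)
  also have "\<dots> = h1_part e lam K x * hm1_part e lam K x"
    unfolding h1_part_def hm1_part_def c_def using lam
    by (simp add: power_mult_distrib power_divide less_imp_le)
  finally show ?thesis .
qed

lemma hm1_part_has_derivative:
  assumes sd: "spectral_data e lam"
    and coeff: "\<And>n. ((\<lambda>s. inner (w s) (e n)) has_real_derivative
                   - (lam n)\<^sup>2 * inner (w t) (e n) - lam n * inner g (e n)) (at t within S)"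
  shows "((\<lambda>s. hm1_part e lam K (w s)) has_real_derivative
           - 2 * h1_part e lam K (w t) - 2 * inner (projP e K (w t)) g) (at t within S)"
proof -
  define c where "c n = inner (w t) (e n)" for n
  have "((\<lambda>s. hm1_part e lam K (w s)) has_real_derivative
      (\<Sum>n<K. of_nat 2 * ((- (lam n)\<^sup>2 * c n - lam n * inner g (e n)) * c n ^ (2 - Suc 0)) / lam n))
      (at t within S)"
    unfolding hm1_part_def c_def by (intro DERIV_sum DERIV_cdivide DERIV_power coeff)
  also have "(\<Sum>n<K. of_nat 2 * ((- (lam n)\<^sup>2 * c n - lam n * inner g (e n)) * c n ^ (2 - Suc 0)) / lam n)
      = (\<Sum>n<K. - 2 * (lam n * (c n)\<^sup>2) - 2 * (c n * inner g (e n)))"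
    using spectral_data_pos[OF sd]
    by (intro sum.cong refl) (simp add: field_simps power2_eq_square less_imp_neq[symmetric])
  also have "\<dots> = - 2 * h1_part e lam K (w t) - 2 * inner (projP e K (w t)) g"
    by (simp add: h1_part_def c_def inner_commute[of "projP e K (w t)" g] inner_projP_right sum_subtractf
        sum_distrib_left)
  finally show ?thesis .
qed

lemma hm1_part_solution_diff_has_derivative:
  assumes sd: "spectral_data e lam"
    and u1: "is_solution e lam F T u1" and u2: "is_solution e lam F T u2" and t: "t \<in> {-T..0}"
  shows "((\<lambda>s. hm1_part e lam K (u1 s - u2 s)) has_real_derivative
           - 2 * h1_part e lam K (u1 t - u2 t) - 2 * inner (projP e K (u1 t - u2 t)) (F (u1 t) - F (u2 t)))
         (at t within {-T..0})"
proof (rule hm1_part_has_derivative[OF sd])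
  fix n
  have "((\<lambda>s. inner (u1 s) (e n) - inner (u2 s) (e n)) has_real_derivative
      (- (lam n)\<^sup>2 * inner (u1 t) (e n) - lam n * inner (F (u1 t)) (e n)) -
      (- (lam n)\<^sup>2 * inner (u2 t) (e n) - lam n * inner (F (u2 t)) (e n))) (at t within {-T..0})"
    using u1 u2 t by (intro DERIV_diff) (auto simp: is_solution_def)
  then show "((\<lambda>s. inner (u1 s - u2 s) (e n)) has_real_derivative
      - (lam n)\<^sup>2 * inner (u1 t - u2 t) (e n) - lam n * inner (F (u1 t) - F (u2 t)) (e n))
      (at t within {-T..0})"
    by (simp add: inner_diff_left algebra_simps)
qed

lemma quartic_lower_bound:
  fixes z L B :: real
  assumes "0 \<le> B"
  shows "0 \<le> z^4/4 - L * z\<^sup>2 - B * z + 2 * L\<^sup>2 + B\<^sup>2/2 + B/2"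
proof -
  have "0 \<le> (z\<^sup>2 - 4*L)\<^sup>2/8 + (z\<^sup>2 - 2*B)\<^sup>2/8 + B * (z - 1)\<^sup>2/2" using assms by simp
  also have "\<dots> = z^4/4 - L * z\<^sup>2 - B * z + 2 * L\<^sup>2 + B\<^sup>2/2 + B/2"
    unfolding power2_eq_square power4_eq_xxxx by (simp add: field_simps)
  finally show ?thesis .
qed

definition growth_rate :: "real \<Rightarrow> real \<Rightarrow> real" where
  "growth_rate L \<sigma> = 2 * \<sigma>^4 + 2 * L * \<sigma> + 2 * L\<^sup>2 + (L + 2 * L * \<sigma>)\<^sup>2/2 + (L + 2 * L * \<sigma>)/2"

lemma growth_rate_nonneg: "0 \<le> L \<Longrightarrow> 0 \<le> \<sigma> \<Longrightarrow> 0 \<le> growth_rate L \<sigma>"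
  unfolding growth_rate_def by simp

text \<open>Here \<open>p\<close> and \<open>\<Phi>\<close> are the \<open>H\<^sup>-\<^sup>1\<close> norms of two spectral truncations of \<open>w\<close>, \<open>D\<^sub>N\<close>, \<open>D\<^sub>K\<close>
  their time derivatives, \<open>Y\<^sub>N\<close>, \<open>Y\<^sub>K\<close> their \<open>H\<^sup>1\<close> norms, and \<open>r\<close>, \<open>t\<close> the \<open>H\<close> norms of the longer
  truncation and of its tail. In the variable \<open>z = r/\<surd>p\<close> the dissipation of \<open>\<Phi>\<close> contributes
  \<open>z\<^sup>4/4\<close>, which dominates the quadratic and linear losses due to the nonlinearity.\<close>
lemma log_ratio_growth_scalar:
  fixes p \<Phi> r t \<rho> Y\<^sub>N Y\<^sub>K D\<^sub>N D\<^sub>K G L \<sigma> :: real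
  assumes p: "0 < p" and p\<Phi>: "p \<le> \<Phi>" "\<Phi> \<le> 2 * p" and r: "0 \<le> r" and t: "0 \<le> t" "t\<^sup>2 \<le> p"
    and L: "0 \<le> L" and \<sigma>: "0 \<le> \<sigma>" and \<rho>: "0 \<le> \<rho>" "\<rho> \<le> \<sigma> * sqrt p"
    and G: "0 \<le> G" "G \<le> L * (r + t)"
    and Y\<^sub>N: "Y\<^sub>N \<le> \<sigma>^4 * p" and D\<^sub>N: "D\<^sub>N \<ge> - 2 * Y\<^sub>N - 2 * \<rho> * G"
    and Y\<^sub>K: "(r\<^sup>2)\<^sup>2 \<le> Y\<^sub>K * \<Phi>" and D\<^sub>K: "D\<^sub>K \<le> - 2 * Y\<^sub>K + 2 * r * G"
  shows "0 \<le> D\<^sub>N / p - D\<^sub>K / (2 * \<Phi>) + growth_rate L \<sigma>"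
proof -
  define q where "q = sqrt p"
  have q: "0 < q" "q\<^sup>2 = p" using p by (auto simp: q_def)
  have tq: "t \<le> q" using t q by (metis real_sqrt_abs real_sqrt_le_mono abs_of_nonneg q_def)
  define z where "z = r / q"
  have rz: "r = z * q" and z: "0 \<le> z" using q r by (auto simp: z_def)
  have \<Phi>: "0 < \<Phi>" using p p\<Phi> by linarith
  define B where "B = L + 2 * L * \<sigma>"
  have "L * (r + t) \<le> L * (z * q + q)" using tq rz L by (intro mult_left_mono) auto
  then have Gq: "G \<le> L * (z * q + q)" using G by linarith
  have low: "D\<^sub>N / p \<ge> - 2 * \<sigma>^4 - 2 * \<sigma> * L * z - 2 * \<sigma> * L"
  proof -
    have "\<rho> * G \<le> (\<sigma> * q) * (L * (z * q + q))"
      using \<rho> G Gq by (intro mult_mono) (auto simp: q_def)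
    also have "\<dots> = (\<sigma> * L * z + \<sigma> * L) * q\<^sup>2" by (simp add: algebra_simps power2_eq_square)
    finally have "\<rho> * G \<le> (\<sigma> * L * z + \<sigma> * L) * p" using q(2) by simp
    then have "D\<^sub>N \<ge> (- 2 * \<sigma>^4 - 2 * \<sigma> * L * z - 2 * \<sigma> * L) * p"
      using D\<^sub>N Y\<^sub>N by (simp add: algebra_simps)
    then show ?thesis using p by (simp add: pos_le_divide_eq)
  qed
  have dissipation: "Y\<^sub>K / \<Phi> \<ge> z^4/4"
  proof -
    have "Y\<^sub>K / \<Phi> \<ge> (r\<^sup>2)\<^sup>2 / \<Phi>\<^sup>2" using Y\<^sub>K \<Phi> by (simp add: divide_simps power2_eq_square)
    moreover have "(r\<^sup>2)\<^sup>2 / \<Phi>\<^sup>2 \<ge> (r\<^sup>2)\<^sup>2 / (2 * p)\<^sup>2"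
      using p\<Phi> \<Phi> by (intro divide_left_mono power_mono mult_pos_pos) auto
    moreover have "(r\<^sup>2)\<^sup>2 / (2 * p)\<^sup>2 = z^4/4"
      using q rz by (simp add: power2_eq_square field_simps power4_eq_xxxx flip: q(2))
    ultimately show ?thesis by linarith
  qed
  have loss: "r * G / \<Phi> \<le> L * z\<^sup>2 + L * z"
  proof -
    have "r * G \<le> r * (L * (z * q + q))" using Gq r by (rule mult_left_mono)
    also have "\<dots> = L * (z * q) * (z * q + q)" using rz by simp
    also have "\<dots> = (L * z\<^sup>2 + L * z) * q\<^sup>2" by (simp add: power2_eq_square algebra_simps)
    also have "\<dots> = (L * z\<^sup>2 + L * z) * p" using q(2) by simp
    also have "\<dots> \<le> (L * z\<^sup>2 + L * z) * \<Phi>" using p\<Phi> L z by (intro mult_left_mono) auto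
    finally show ?thesis using \<Phi> by (simp add: pos_divide_le_eq)
  qed
  have "- D\<^sub>K / (2 * \<Phi>) \<ge> Y\<^sub>K / \<Phi> - r * G / \<Phi>"
    using D\<^sub>K \<Phi> by (simp add: divide_simps)
  then have high: "- D\<^sub>K / (2 * \<Phi>) \<ge> z^4/4 - L * z\<^sup>2 - L * z"
    using dissipation loss by linarith
  have "0 \<le> z^4/4 - L * z\<^sup>2 - B * z + 2 * L\<^sup>2 + B\<^sup>2/2 + B/2"
    using L \<sigma> by (intro quartic_lower_bound) (simp add: B_def)
  then show ?thesis
    using low high unfolding growth_rate_def B_def by (simp add: algebra_simps)
qed

lemma log_ratio_growth:
  assumes sd: "spectral_data e lam" and L: "0 \<le> L" and NK: "N \<le> K"
    and g: "norm g \<le> L * norm w" and p: "0 < hm1_part e lam N w"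
    and tail: "(norm (projQ e K w))\<^sup>2 \<le> hm1_part e lam N w"
    and cone: "hm1_part e lam K w \<le> 2 * hm1_part e lam N w"
  shows "0 \<le> (- 2 * h1_part e lam N w - 2 * inner (projP e N w) g) / hm1_part e lam N w
           - (- 2 * h1_part e lam K w - 2 * inner (projP e K w) g) / (2 * hm1_part e lam K w)
           + growth_rate L (sqrt (lam N))"
proof (rule log_ratio_growth_scalar)
  let ?p = "hm1_part e lam N w"
  have lam: "0 < lam N" using spectral_data_pos[OF sd] .
  show "?p \<le> hm1_part e lam K w" using hm1_part_mono[OF sd NK] .
  have "(norm (projP e N w))\<^sup>2 \<le> (sqrt (lam N) * sqrt ?p)\<^sup>2"
    using norm_projP_sq_le_hm1_part[OF sd, of N w] lam p by (simp add: power_mult_distrib)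
  then show "norm (projP e N w) \<le> sqrt (lam N) * sqrt ?p"
    by (rule power2_le_imp_le) (use lam p in simp)
  have "norm w \<le> norm (projP e K w) + norm (projQ e K w)"
    using norm_triangle_ineq[of "projP e K w" "projQ e K w"] by (simp add: projQ_def)
  then show "norm g \<le> L * (norm (projP e K w) + norm (projQ e K w))"
    using g L by (meson mult_left_mono order_trans)
  have "sqrt (lam N) ^ 4 = ((sqrt (lam N))\<^sup>2)\<^sup>2"
    unfolding power4_eq_xxxx power2_eq_square by (simp only: mult.assoc)
  then have "sqrt (lam N) ^ 4 = (lam N)\<^sup>2" using lam by simp
  then show "h1_part e lam N w \<le> sqrt (lam N) ^ 4 * ?p"
    using h1_part_le_hm1_part[OF sd, of N w] by simp
  show "- 2 * h1_part e lam N w - 2 * norm (projP e N w) * norm g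
      \<le> - 2 * h1_part e lam N w - 2 * inner (projP e N w) g"
    using norm_cauchy_schwarz[of "projP e N w" g] by simp
  show "((norm (projP e K w))\<^sup>2)\<^sup>2 \<le> h1_part e lam K w * hm1_part e lam K w"
    using norm_projP_pow4_le[OF sd] .
  show "- 2 * h1_part e lam K w - 2 * inner (projP e K w) g
      \<le> - 2 * h1_part e lam K w + 2 * norm (projP e K w) * norm g"
    using Cauchy_Schwarz_ineq2[of "projP e K w" g] by linarith
qed (use assms spectral_data_pos[OF sd, of N] in auto)

lemma uniform_projQ_sq_below:
  fixes a b :: real
  assumes sd: "spectral_data e lam" and w: "continuous_on {a..b} w"
    and p: "continuous_on {a..b} p" "\<forall>s\<in>{a..b}. 0 < p s"
  obtains K where "N \<le> K" "\<forall>s\<in>{a..b}. (norm (projQ e K (w s)))\<^sup>2 \<le> p s"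
proof (cases "a \<le> b")
  case False
  then show ?thesis by (intro that[of N]) auto
next
  case True
  obtain s\<^sub>0 where s\<^sub>0: "s\<^sub>0 \<in> {a..b}" "\<forall>s\<in>{a..b}. p s\<^sub>0 \<le> p s"
    using continuous_attains_inf[OF compact_Icc _ p(1)] True by auto
  have "\<forall>\<^sub>F K in sequentially. \<forall>x\<in>w ` {a..b}. norm (projQ e K x) < sqrt (p s\<^sub>0)"
    using p(2) s\<^sub>0(1)
    by (intro uniform_projQ_tendsto_zero[OF sd] compact_continuous_image[OF w]) auto
  then obtain K\<^sub>0 where K\<^sub>0: "\<forall>K\<ge>K\<^sub>0. \<forall>s\<in>{a..b}. norm (projQ e K (w s)) < sqrt (p s\<^sub>0)"
    by (auto simp: eventually_sequentially)
  show ?thesis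
  proof (rule that[of "max K\<^sub>0 N"])
    show "\<forall>s\<in>{a..b}. (norm (projQ e (max K\<^sub>0 N) (w s)))\<^sup>2 \<le> p s"
    proof
      fix s assume s: "s \<in> {a..b}"
      have "norm (projQ e (max K\<^sub>0 N) (w s)) < sqrt (p s\<^sub>0)" using K\<^sub>0 s by simp
      then have "(norm (projQ e (max K\<^sub>0 N) (w s)))\<^sup>2 < p s\<^sub>0"
        using p(2) s\<^sub>0(1) by (metis norm_ge_zero real_less_rsqrt real_sqrt_pow2 less_imp_le
            power_strict_mono zero_less_numeral)
      then show "(norm (projQ e (max K\<^sub>0 N) (w s)))\<^sup>2 \<le> p s" using s\<^sub>0(2) s by fastforce
    qed
  qed simp
qed

text \<open>The \<open>H\<^sup>-\<^sup>1\<close> norm of the full difference need not be differentiable in time, so it is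
  replaced by the truncation \<open>\<Phi>\<close> at a level \<open>K\<close> beyond which the \<open>H\<close>-tail is dominated by \<open>p\<close>.\<close>
lemma hm1_part_local_growth:
  fixes u1 u2 :: "real \<Rightarrow> 'a::{real_inner,complete_space}"
  assumes sd: "spectral_data e lam" and F: "L-lipschitz_on UNIV F"
    and u1: "is_solution e lam F T u1" and u2: "is_solution e lam F T u2"
    and cone: "\<forall>t\<in>{-T..0}. u1 t - u2 t \<in> Kplus e lam N"
    and ab: "-T \<le> a" "a \<le> b" "b \<le> 0"
    and pos: "\<forall>s\<in>{a..b}. 0 < hm1_part e lam N (u1 s - u2 s)"
  shows "hm1_part e lam N (u1 a - u2 a)
    \<le> 2 * exp (2 * growth_rate L (sqrt (lam N)) * (b - a)) * hm1_part e lam N (u1 b - u2 b)"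
proof -
  define w where "w s = u1 s - u2 s" for s
  define p where "p s = hm1_part e lam N (w s)" for s
  define c where "c = growth_rate L (sqrt (lam N))"
  have L: "0 \<le> L" using F by (simp add: lipschitz_on_def)
  have lam: "lam n \<noteq> 0" for n using spectral_data_pos[OF sd, of n] by simp
  have "continuous_on {-T..0} w"
    using u1 u2 unfolding w_def is_solution_def by (intro continuous_intros) auto
  then have w_cont: "continuous_on {a..b} w" by (rule continuous_on_subset) (use ab in auto)
  have part_cont: "continuous_on {a..b} (\<lambda>s. hm1_part e lam K (w s))" for K
    unfolding hm1_part_def using lam by (intro continuous_intros w_cont) simp
  have p_pos: "0 < p s" if "s \<in> {a..b}" for s using pos that by (simp add: p_def w_def)
  obtain K where NK: "N \<le> K" and tail: "\<forall>s\<in>{a..b}. (norm (projQ e K (w s)))\<^sup>2 \<le> p s"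
    using uniform_projQ_sq_below[OF sd w_cont part_cont[of N]] p_pos unfolding p_def by blast
  define \<Phi> where "\<Phi> s = hm1_part e lam K (w s)" for s
  have p\<Phi>: "p s \<le> \<Phi> s" for s unfolding p_def \<Phi>_def using hm1_part_mono[OF sd NK] .
  have \<Phi>p: "\<Phi> s \<le> 2 * p s" if "s \<in> {-T..0}" for s
    using hm1_part_le_hm1_sq[OF sd] Kplus_hm1_sq_le[OF sd] cone that
    unfolding \<Phi>_def p_def w_def by (meson order_trans)
  have \<Phi>_pos: "0 < \<Phi> s" if "s \<in> {a..b}" for s using p_pos[OF that] p\<Phi>[of s] by linarith
  define G where "G s = ln (p s) - ln (\<Phi> s) / 2 + c * s" for s
  have "G a \<le> G b"
  proof (rule DERIV_nonneg_imp_increasing_open[OF ab(2)])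
    have "continuous_on {a..b} p" "continuous_on {a..b} \<Phi>"
      unfolding p_def \<Phi>_def by (fact part_cont)+
    then show "continuous_on {a..b} G"
      unfolding G_def using p_pos \<Phi>_pos by (intro continuous_intros) force+
  next
    fix x assume x: "a < x" "x < b"
    then have xT: "x \<in> {-T..0}" and xab: "x \<in> {a..b}" using ab by auto
    have at_x: "at x within {-T..0} = at x" using x ab by (intro at_within_Icc_at) auto
    define D where "D J = - 2 * h1_part e lam J (w x) - 2 * inner (projP e J (w x)) (F (u1 x) - F (u2 x))"
      for J
    have dpart: "((\<lambda>s. hm1_part e lam J (w s)) has_real_derivative D J) (at x)" for J
      using hm1_part_solution_diff_has_derivative[OF sd u1 u2 xT] at_x
      unfolding D_def w_def by simp
    have px: "0 < p x" and \<Phi>x: "0 < \<Phi> x" using p_pos[OF xab] \<Phi>_pos[OF xab] .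
    have "(G has_real_derivative 1 / p x * D N - 1 / \<Phi> x * D K / 2 + c) (at x)"
      unfolding G_def[abs_def] p_def[abs_def] \<Phi>_def[abs_def]
      using px \<Phi>x unfolding p_def \<Phi>_def
      by (intro DERIV_add DERIV_diff DERIV_cdivide DERIV_chain2[OF DERIV_ln_divide] dpart
          DERIV_cmult_Id) auto
    moreover have "0 \<le> D N / p x - D K / (2 * \<Phi> x) + c"
      unfolding D_def p_def \<Phi>_def c_def
    proof (rule log_ratio_growth[OF sd L NK])
      show "norm (F (u1 x) - F (u2 x)) \<le> L * norm (w x)"
        using F by (simp add: lipschitz_on_def dist_norm w_def)
    qed (use px tail xab \<Phi>p[OF xT] in \<open>auto simp: p_def \<Phi>_def\<close>)
    ultimately show "\<exists>y. (G has_real_derivative y) (at x) \<and> 0 \<le> y" by auto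
  qed
  moreover have "0 < p a" "0 < p b" using p_pos ab by auto
  moreover have "ln (\<Phi> a) \<le> ln 2 + ln (p a)"
  proof -
    have "ln (\<Phi> a) \<le> ln (2 * p a)" using \<Phi>p[of a] \<Phi>_pos[of a] ab by simp
    then show ?thesis using \<open>0 < p a\<close> by (simp add: ln_mult)
  qed
  moreover have "ln (p b) \<le> ln (\<Phi> b)" using p\<Phi>[of b] \<open>0 < p b\<close> by simp
  ultimately have "ln (p a) \<le> ln (2 * exp (2 * c * (b - a)) * p b)"
    by (simp add: G_def ln_mult algebra_simps)
  then show ?thesis using \<open>0 < p a\<close> \<open>0 < p b\<close> by (simp add: p_def w_def c_def)
qed

text \<open>A nonnegative continuous function obeying the growth bound on every initial interval
  where it stays positive cannot vanish: at the first time it drops to a small fraction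
  of \<open>p a\<close>, the bound would already be violated.\<close>
lemma growth_bound_of_local_growth_bound:
  fixes p :: "real \<Rightarrow> real"
  assumes ab: "a \<le> b" and cont: "continuous_on {a..b} p" and nonneg: "\<forall>s\<in>{a..b}. 0 \<le> p s"
    and M: "0 \<le> M" and c: "0 \<le> c"
    and local: "\<And>s. s \<in> {a..b} \<Longrightarrow> \<forall>r\<in>{a..s}. 0 < p r \<Longrightarrow> p a \<le> M * exp (c * (s - a)) * p s"
  shows "p a \<le> M * exp (c * (b - a)) * p b"
proof (cases "p a = 0")
  case True
  then show ?thesis using nonneg ab M by simp
next
  case False
  then have pa: "0 < p a" using nonneg ab by force
  define m where "m = p a / (2 * M * exp (c * (b - a)))"
  have "p a \<le> M * p a" using local[of a] pa ab by simp
  then have growth: "1 * 1 \<le> M * exp (c * (b - a))"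
    using pa ab c by (intro mult_mono) auto
  then have m: "0 < m" "m < p a" using pa by (auto simp: m_def field_simps)
  define Z where "Z = {s \<in> {a..b}. p s \<le> m}"
  have "\<forall>s\<in>{a..b}. 0 < p s"
  proof (rule ccontr)
    assume "\<not> (\<forall>s\<in>{a..b}. 0 < p s)"
    then have "Z \<noteq> {}" using nonneg m(1) by (force simp: Z_def)
    moreover have "closed Z"
      unfolding Z_def using closed_vimage_Int[OF closed_atMost cont closed_atLeastAtMost]
      by (simp add: vimage_def Int_def conj_commute)
    moreover have bdd: "bdd_below Z" by (auto simp: Z_def bdd_below_def)
    ultimately have "Inf Z \<in> Z" by (intro closed_contains_Inf)
    define s\<^sub>0 where "s\<^sub>0 = Inf Z"
    have s\<^sub>0: "a \<le> s\<^sub>0" "s\<^sub>0 \<le> b" "p s\<^sub>0 \<le> m" using \<open>Inf Z \<in> Z\<close> by (auto simp: s\<^sub>0_def Z_def)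
    have first: "s\<^sub>0 \<le> s" if "s \<in> Z" for s unfolding s\<^sub>0_def using that bdd by (rule cInf_lower)
    have "continuous_on {a..s\<^sub>0} p" by (rule continuous_on_subset[OF cont]) (use s\<^sub>0 in auto)
    then obtain x where x: "a \<le> x" "x \<le> s\<^sub>0" "p x = m"
      using IVT2'[of p s\<^sub>0 m a] s\<^sub>0 m(2) by auto
    then have "x \<in> Z" using s\<^sub>0 by (simp add: Z_def)
    then have p_s\<^sub>0: "p s\<^sub>0 = m" using first[of x] x by simp
    have "\<forall>r\<in>{a..s\<^sub>0}. 0 < p r"
    proof
      fix r assume r: "r \<in> {a..s\<^sub>0}"
      show "0 < p r"
      proof (cases "r = s\<^sub>0")
        case False
        then have "r \<notin> Z" using first r by force
        then show ?thesis using r s\<^sub>0 m(1) by (auto simp: Z_def)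
      qed (use p_s\<^sub>0 m in simp)
    qed
    then have "p a \<le> M * exp (c * (s\<^sub>0 - a)) * m"
      using local[of s\<^sub>0] s\<^sub>0 p_s\<^sub>0 by simp
    also have "\<dots> \<le> M * exp (c * (b - a)) * m"
    proof -
      have "c * (s\<^sub>0 - a) \<le> c * (b - a)" using s\<^sub>0 c by (intro mult_left_mono) auto
      then show ?thesis using M m by (intro mult_right_mono mult_left_mono) auto
    qed
    also have "\<dots> = p a / 2" using growth by (auto simp: m_def)
    finally show False using pa by simp
  qed
  then show ?thesis using local[of b] ab by simp
qed

lemma Kplus_solutions_backward_estimate:
  fixes u1 u2 :: "real \<Rightarrow> 'a::{real_inner,complete_space}"
  assumes sd: "spectral_data e lam" and F: "L-lipschitz_on UNIV F" and T: "0 < T"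
    and u1: "is_solution e lam F T u1" and u2: "is_solution e lam F T u2"
    and cone: "\<forall>t\<in>{-T..0}. u1 t - u2 t \<in> Kplus e lam N"
  shows "hm1_sq e lam (u1 (-T) - u2 (-T))
    \<le> 4 * exp (2 * growth_rate L (sqrt (lam N)) * T) * hm1_sq e lam (projP e N (u1 0) - projP e N (u2 0))"
proof -
  define p where "p s = hm1_part e lam N (u1 s - u2 s)" for s
  define c where "c = growth_rate L (sqrt (lam N))"
  have "p (-T) \<le> 2 * exp (2 * c * (0 - -T)) * p 0"
  proof (rule growth_bound_of_local_growth_bound)
    show "continuous_on {-T..0} p"
      unfolding p_def hm1_part_def using u1 u2 spectral_data_pos[OF sd]
      by (intro continuous_intros) (auto simp: is_solution_def less_imp_neq[symmetric])
    show "\<forall>s\<in>{-T..0}. 0 \<le> p s" by (simp add: p_def hm1_part_nonneg[OF sd])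
    have "0 \<le> L" using F by (simp add: lipschitz_on_def)
    then show "0 \<le> 2 * c"
      unfolding c_def using spectral_data_pos[OF sd, of N] by (simp add: growth_rate_nonneg)
    fix s assume "s \<in> {-T..0}" "\<forall>r\<in>{-T..s}. 0 < p r"
    then show "p (-T) \<le> 2 * exp (2 * c * (s - -T)) * p s"
      unfolding p_def c_def by (intro hm1_part_local_growth[OF sd F u1 u2 cone]) auto
  qed (use T in auto)
  moreover have "hm1_sq e lam (u1 (-T) - u2 (-T)) \<le> 2 * p (-T)"
    unfolding p_def using Kplus_hm1_sq_le[OF sd] cone T by simp
  moreover have "hm1_sq e lam (projP e N (u1 0) - projP e N (u2 0)) = p 0"
    unfolding p_def projP_diff[symmetric] by (rule hm1_sq_projP[OF sd])
  ultimately show ?thesis by (simp add: c_def)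
qed

theorem lemma2p1:
  fixes e :: "nat \<Rightarrow> 'a::{real_inner,complete_space}" and lam :: "nat \<Rightarrow> real"
    and N :: nat and L :: real
  assumes "spectral_data e lam"
  shows "\<exists>C \<alpha>. C > 0 \<and> \<alpha> > 0 \<and>
     (\<forall>F :: 'a \<Rightarrow> 'a. bounded (range F) \<longrightarrow> L-lipschitz_on UNIV F \<longrightarrow>
       (\<forall>T u1 u2. T > 0 \<longrightarrow> is_solution e lam F T u1 \<longrightarrow> is_solution e lam F T u2 \<longrightarrow>
          (\<forall>t\<in>{-T..0}. u1 t - u2 t \<in> Kplus e lam N) \<longrightarrow>
          hm1_sq e lam (u1 (-T) - u2 (-T))
            \<le> C * exp (\<alpha> * T) * hm1_sq e lam (projP e N (u1 0) - projP e N (u2 0))))"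
proof -
  define \<alpha> where "\<alpha> = 2 * growth_rate \<bar>L\<bar> (sqrt (lam N)) + 1"
  have rate: "0 \<le> growth_rate \<bar>L\<bar> (sqrt (lam N))"
    using spectral_data_pos[OF assms, of N] by (simp add: growth_rate_nonneg)
  have "hm1_sq e lam (u1 (-T) - u2 (-T))
      \<le> 4 * exp (\<alpha> * T) * hm1_sq e lam (projP e N (u1 0) - projP e N (u2 0))"
    if F: "L-lipschitz_on UNIV F" and T: "0 < T" and u: "is_solution e lam F T u1" "is_solution e lam F T u2"
      and cone: "\<forall>t\<in>{-T..0}. u1 t - u2 t \<in> Kplus e lam N"
    for F :: "'a \<Rightarrow> 'a" and T u1 u2
  proof -
    have "\<bar>L\<bar> = L" using F by (simp add: lipschitz_on_def)
    then have "hm1_sq e lam (u1 (-T) - u2 (-T))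
        \<le> 4 * exp (2 * growth_rate \<bar>L\<bar> (sqrt (lam N)) * T)
            * hm1_sq e lam (projP e N (u1 0) - projP e N (u2 0))"
      using Kplus_solutions_backward_estimate[OF assms F T u cone] by simp
    also have "\<dots> \<le> 4 * exp (\<alpha> * T) * hm1_sq e lam (projP e N (u1 0) - projP e N (u2 0))"
      using T hm1_part_nonneg[OF assms]
      by (intro mult_right_mono mult_left_mono)
        (simp_all add: \<alpha>_def algebra_simps hm1_sq_projP[OF assms] flip: projP_diff)
    finally show ?thesis .
  qed
  moreover have "0 < \<alpha>" using rate by (simp add: \<alpha>_def)
  ultimately show ?thesis by (intro exI[of _ 4] exI[of _ \<alpha>]) auto
qed

end
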